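(* Let $\ell$ be a positive integer, and let $P_\ell$ be the set of all polynomials of length $\ell$ (degree $\ell-1$) in $\mathbb{C}[z]$ with nonzero constant coefficient. Define four maps from $P_\ell\times P_\ell$ to itself: \[ s(f,g)=(g,f),\quad n(f,g)=(-f,g),\quad h(f,g)=(\widetilde{f},\widetilde{g}),\quad r(f,g)=(f^\dagger,g^\dagger). \] These generate a group $G_{\ell,\ell}=\langle s,n,h,r\rangle$ of permutations of $P_\ell\times P_\ell$, which contains a dihedral subgroup $D$ of order $8$ generated by $ns$ and $s$, where $ns$ has order $4$, $s$ has order $2$, and $s(ns)s^{-1}=(ns)^{-1}$. Furthermore: \begin{enumerate} \item If $\ell=1$, then $G_{\ell,\ell}$ is the internal direct product of $D$ and the cyclic group $\langle r\rangle$ of order $2$. \item If $\ell$ is odd and $\ell>1$, then $G_{\ell,\ell}$ is the internal direct product of $D$, the cyclic subgroup $\langle h\rangle$ of order $2$, and the cyclic subgroup $\langle r\rangle$ of order $2$. \item If $\ell$ is even, then $G_{\ell,\ell}$ is the internal central product of $D$ and another dihedral subgroup $\Delta$ of order $8$ generated by $rh$ and $h$, where $rh$ has order $4$, $h$ has order $2$, and $h(rh)h^{-1}=(rh)^{-1}$; thus $G_{\ell,\ell}$ is isomorphic to the extraspecial group of order $2^5$ of $+$ type (the inner holomorph of the dihedral group of order $8$). \end{enumerate} Moreover, for any $t\in G_{\ell,\ell}$, any $f,g\in P_\ell$ and any real $p\ge1$, writing $(a,b)=t(f,g)$, \begin{align*} \|a\|_p\|b\|_p&=\|f\|_p\|g\|_p,\\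 \|ab\|_p&=\|fg\|_p,\\ \|a\widetilde{b}\|_p&=\|f\widetilde{g}\|_p,\\ \operatorname{Re}\int a\widetilde{a}\,\overline{b\widetilde{b}}&=\operatorname{Re}\int f\widetilde{f}\,\overline{g\widetilde{g}}. \end{align*}
   Context: For a polynomial $a(z)=a_0+\cdots+a_dz^d$ of degree $d$, its length is $1+d$ and $a^\dagger(z)=\overline{a_d}+\overline{a_{d-1}}z+\cdots+\overline{a_0}z^d$ (conjugate reciprocal). For a Laurent polynomial $a(z)=\sum_ja_jz^j$: $\widetilde{a}(z)=a(-z)$, $\overline{a(z)}=\sum_j\overline{a_j}z^{-j}$, $\int a$ is the constant coefficient $a_0=\frac{1}{2\pi}\int_0^{2\pi}a(e^{i\theta})d\theta$, and $\|a\|_p=\left(\frac{1}{2\pi}\int_0^{2\pi}|a(e^{i\theta})|^pd\theta\right)^{1/p}$. *)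

theory Defs
  imports "HOL-Analysis.Analysis" "HOL-Computational_Algebra.Polynomial"
    "HOL-Algebra.Bij" "HOL-Algebra.Generated_Groups" "HOL-Algebra.Multiplicative_Group"
begin

definition Pl :: "nat \<Rightarrow> complex poly set" where
  "Pl l = {f. Polynomial.degree f = l - 1 \<and> Polynomial.coeff f 0 \<noteq> 0}"

definition ptilde :: "complex poly \<Rightarrow> complex poly" where
  "ptilde f = pcompose f [:0, -1:]"

definition pdagger :: "complex poly \<Rightarrow> complex poly" where
  "pdagger f = map_poly cnj (reflect_poly f)"

definition smap :: "complex poly \<times> complex poly \<Rightarrow> complex poly \<times> complex poly" where
  "smap x = (snd x, fst x)"
definition nmap :: "complex poly \<times> complex poly \<Rightarrow> complex poly \<times> complex poly" where
  "nmap x = (- fst x, snd x)"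
definition hmap :: "complex poly \<times> complex poly \<Rightarrow> complex poly \<times> complex poly" where
  "hmap x = (ptilde (fst x), ptilde (snd x))"
definition rmap :: "complex poly \<times> complex poly \<Rightarrow> complex poly \<times> complex poly" where
  "rmap x = (pdagger (fst x), pdagger (snd x))"

text \<open>The generators as permutations of Pl l \<times> Pl l (restricted, as elements of BijGroup).\<close>
definition sG where "sG l = restrict smap (Pl l \<times> Pl l)"
definition nG where "nG l = restrict nmap (Pl l \<times> Pl l)"
definition hG where "hG l = restrict hmap (Pl l \<times> Pl l)"
definition rG where "rG l = restrict rmap (Pl l \<times> Pl l)"

definition Gll :: "nat \<Rightarrow> ((complex poly \<times> complex poly) \<Rightarrow> (complex poly \<times> complex poly)) monoid" where
  "Gll l = subgroup_generated (BijGroup (Pl l \<times> Pl l)) {sG l, nG l, hG l, rG l}"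

definition internal_direct_product2 :: "('a, 'b) monoid_scheme \<Rightarrow> 'a set \<Rightarrow> 'a set \<Rightarrow> bool" where
  "internal_direct_product2 G H K \<longleftrightarrow>
     H \<lhd> G \<and> K \<lhd> G \<and> H \<inter> K = {\<one>\<^bsub>G\<^esub>} \<and> H <#>\<^bsub>G\<^esub> K = carrier G"

definition internal_direct_product3 :: "('a, 'b) monoid_scheme \<Rightarrow> 'a set \<Rightarrow> 'a set \<Rightarrow> 'a set \<Rightarrow> bool" where
  "internal_direct_product3 G H K L \<longleftrightarrow>
     H \<lhd> G \<and> K \<lhd> G \<and> L \<lhd> G \<and>
     H \<inter> (K <#>\<^bsub>G\<^esub> L) = {\<one>\<^bsub>G\<^esub>} \<and>
     K \<inter> (H <#>\<^bsub>G\<^esub> L) = {\<one>\<^bsub>G\<^esub>} \<and>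
     L \<inter> (H <#>\<^bsub>G\<^esub> K) = {\<one>\<^bsub>G\<^esub>} \<and>
     H <#>\<^bsub>G\<^esub> K <#>\<^bsub>G\<^esub> L = carrier G"

definition internal_central_product :: "('a, 'b) monoid_scheme \<Rightarrow> 'a set \<Rightarrow> 'a set \<Rightarrow> bool" where
  "internal_central_product G H K \<longleftrightarrow>
     subgroup H G \<and> subgroup K G \<and>
     (\<forall>x\<in>H. \<forall>y\<in>K. x \<otimes>\<^bsub>G\<^esub> y = y \<otimes>\<^bsub>G\<^esub> x) \<and> H <#>\<^bsub>G\<^esub> K = carrier G"

text \<open>Inner holomorph of a group D: the permutation group of carrier D generated by all
  left and right translations (isomorphic to D \<rtimes> Inn D).\<close>
definition inner_holomorph :: "('a, 'b) monoid_scheme \<Rightarrow> ('a \<Rightarrow> 'a) monoid" where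
  "inner_holomorph D = subgroup_generated (BijGroup (carrier D))
     ((\<lambda>a. \<lambda>x\<in>carrier D. a \<otimes>\<^bsub>D\<^esub> x) ` carrier D \<union> (\<lambda>a. \<lambda>x\<in>carrier D. x \<otimes>\<^bsub>D\<^esub> a) ` carrier D)"

text \<open>The mean (1/2pi) times the integral over [0,2pi] of F(cis t); for a Laurent polynomial this is its constant coefficient.\<close>
definition circ_mean :: "(complex \<Rightarrow> complex) \<Rightarrow> complex" where
  "circ_mean F = complex_of_real (1 / (2 * pi)) * integral {0..2*pi} (\<lambda>\<theta>. F (cis \<theta>))"

definition lpnorm :: "real \<Rightarrow> complex poly \<Rightarrow> real" where
  "lpnorm p a = ((1 / (2 * pi)) * integral {0..2*pi} (\<lambda>\<theta>. norm (poly a (cis \<theta>)) powr p)) powr (1 / p)"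

end

theory Submission
  imports Defs
begin

text \<open>Every element of \<open>G\<^sub>l\<^sub>,\<^sub>l\<close> acts as \<open>(f, g) \<mapsto> (\<plusminus>T a, \<plusminus>T b)\<close>, where \<open>(a, b)\<close> is
  \<open>(f, g)\<close> or \<open>(g, f)\<close>, the two signs are independent and \<open>T\<close> is one of \<open>id, \<sim>, \<dagger>, \<dagger>\<sim>\<close>.
  The only relation beyond the obvious ones is \<open>\<sim>\<dagger> = (-1)\<^sup>l\<^sup>-\<^sup>1 \<dagger>\<sim>\<close> on polynomials of
  degree \<open>l - 1\<close>, and test polynomials show that these 32 maps are pairwise distinct, except that
  \<open>\<sim>\<close> is trivial for \<open>l = 1\<close>. So \<open>G\<close> is parametrized by 5-bit codes with an explicit
  multiplication, and the group-theoretic claims become finite computations on codes. For even \<open>l\<close>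
  the element \<open>d r\<^sup>i h\<^sup>j\<close> (\<open>d \<in> D\<close>) is sent to the translation \<open>x \<mapsto> d x s\<^sup>j n\<^sup>i\<close> of \<open>D\<close>; since
  \<open>r \<mapsto> n, h \<mapsto> s\<close> extends to an anti-isomorphism \<open>\<Delta> \<rightarrow> D\<close>, this is an isomorphism onto the
  inner holomorph.
  The four quantities are invariant under each generator: under \<open>\<sim>\<close> because it rotates the
  circle by \<open>\<pi>\<close>, under \<open>\<dagger>\<close> because \<open>f\<^sup>\<dagger>(z) = z\<^sup>l\<^sup>-\<^sup>1 conj (f z)\<close> on the circle, which turns the
  integrand of the last quantity into its conjugate.\<close>

text \<open>HOL-Algebra's \<open>coeff\<close>, \<open>monom\<close> and \<open>smult\<close> would shadow those of polynomials.\<close>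
hide_const (open) up_ring.coeff up_ring.monom module.smult

lemma (in group) ord_eq_2I:
  assumes "x \<in> carrier G" "x \<noteq> \<one>" "x \<otimes> x = \<one>"
  shows "ord x = 2"
proof -
  have "ord x dvd 2" using assms by (simp add: pow_eq_id [symmetric] numeral_2_eq_2)
  then have "0 < ord x" "ord x \<le> 2" by (auto intro: dvd_imp_le Nat.gr0I)
  moreover have "ord x \<noteq> 1" using assms ord_eq_1 by blast
  ultimately show ?thesis by linarith
qed

lemma (in group) ord_eq_4I:
  assumes "x \<in> carrier G" "x \<otimes> x \<noteq> \<one>" "(x \<otimes> x) \<otimes> (x \<otimes> x) = \<one>"
  shows "ord x = 4"
proof -
  have pow2: "x [^] (2::nat) = x \<otimes> x" using assms(1) by (simp add: numeral_2_eq_2)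
  have "x [^] (4::nat) = (x [^] (2::nat)) [^] (2::nat)" using assms(1) by (simp add: nat_pow_pow)
  then have dvd4: "ord x dvd 4" using assms by (simp add: pow_eq_id [symmetric] pow2 numeral_2_eq_2)
  then have "0 < ord x" "ord x \<le> 4" by (auto intro: dvd_imp_le Nat.gr0I)
  moreover have "\<not> ord x dvd 2" using assms(1,2) by (simp add: pow_eq_id [symmetric] pow2)
  then have "ord x \<noteq> 1" "ord x \<noteq> 2" by auto
  moreover have "ord x \<noteq> 3" using dvd4 by auto
  ultimately show ?thesis by linarith
qed

lemma iso_of_common_parametrization:
  assumes "carrier G = range f" "carrier H = range g" "inj f" "inj g"
    and "\<And>a b. f a \<otimes>\<^bsub>G\<^esub> f b = f (m a b)" "\<And>a b. g a \<otimes>\<^bsub>H\<^esub> g b = g (m a b)"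
  shows "G \<cong> H"
proof -
  have inv_f: "the_inv f (f a) = a" for a by (rule the_inv_f_f [OF assms(3)])
  have "g \<circ> the_inv f \<in> iso G H"
  proof (rule isoI)
    show "g \<circ> the_inv f \<in> hom G H"
      by (rule homI) (auto simp: assms(1,2,5,6) inv_f)
    show "bij_betw (g \<circ> the_inv f) (carrier G) (carrier H)"
      unfolding assms(1,2) bij_betw_def
      using assms(4) by (auto simp: inv_f inj_on_def image_iff)
  qed
  then show ?thesis by (auto simp: is_iso_def)
qed

lemma coeff_ptilde: "coeff (ptilde f) j = (-1) ^ j * coeff f j"
  unfolding ptilde_def by (simp add: coeff_pcompose_linear)

lemma poly_ptilde [simp]: "poly (ptilde f) x = poly f (- x)"
  unfolding ptilde_def by (simp add: poly_pcompose)

lemma ptilde_ptilde [simp]: "ptilde (ptilde f) = f"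
  by (simp add: poly_eq_iff coeff_ptilde power_mult_distrib [symmetric])

lemma degree_ptilde [simp]: "degree (ptilde f) = degree f"
  unfolding ptilde_def by (simp add: degree_pcompose)

lemma ptilde_uminus [simp]: "ptilde (- f) = - ptilde f"
  by (simp add: poly_eq_iff coeff_ptilde)

lemma ptilde_mult: "ptilde (f * g) = ptilde f * ptilde g"
  unfolding ptilde_def by (simp add: pcompose_mult)

lemma ptilde_smult: "ptilde (smult c f) = smult c (ptilde f)"
  by (simp add: poly_eq_iff coeff_ptilde)

lemma coeff_pdagger:
  "coeff (pdagger f) n = (if n > degree f then 0 else cnj (coeff f (degree f - n)))"
  unfolding pdagger_def by (simp add: coeff_map_poly coeff_reflect_poly)

lemma degree_pdagger: "coeff f 0 \<noteq> 0 \<Longrightarrow> degree (pdagger f) = degree f"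
  unfolding pdagger_def by (subst map_poly_degree_eq) (auto simp: coeff_reflect_poly)

lemma pdagger_pdagger: "coeff f 0 \<noteq> 0 \<Longrightarrow> pdagger (pdagger f) = f"
  by (auto simp: poly_eq_iff coeff_pdagger degree_pdagger coeff_eq_0)

lemma pdagger_uminus [simp]: "pdagger (- f) = - pdagger f"
  by (simp add: poly_eq_iff coeff_pdagger)

lemma pdagger_smult: "pdagger (smult c f) = smult (cnj c) (pdagger f)"
  by (cases "c = 0") (auto simp: poly_eq_iff coeff_pdagger)

lemma ptilde_pdagger:
  assumes "coeff f 0 \<noteq> 0"
  shows "ptilde (pdagger f) = smult ((-1) ^ degree f) (pdagger (ptilde f))"
proof -
  have "(-1::complex) ^ n = (-1) ^ m * (-1) ^ (m - n)" if "n \<le> m" for n m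
  proof -
    obtain k where "m = n + k" using \<open>n \<le> m\<close> le_Suc_ex by blast
    moreover have "(-1::complex) ^ k * (-1) ^ k = 1" by (simp flip: power_mult_distrib)
    ultimately show ?thesis by (simp add: power_add mult.assoc)
  qed
  then show ?thesis
    using assms by (auto simp: poly_eq_iff coeff_pdagger coeff_ptilde degree_pdagger not_less)
qed

lemma poly_pdagger_unit_circle:
  assumes "norm z = 1"
  shows "poly (pdagger f) z = z ^ degree f * cnj (poly f z)"
proof -
  have "z * cnj z = 1" using complex_norm_square [of z] assms by simp
  then have "inverse (cnj z) = z" by (intro inverse_unique) (simp add: mult.commute)
  moreover have "z \<noteq> 0" using assms by auto
  ultimately show ?thesis by (simp add: pdagger_def poly_reflect_poly_nz)
qed

lemma norm_poly_pdagger_unit_circle: "norm z = 1 \<Longrightarrow> norm (poly (pdagger f) z) = norm (poly f z)"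
  by (simp add: poly_pdagger_unit_circle norm_mult norm_power)

lemma Pl_uminus: "f \<in> Pl l \<Longrightarrow> - f \<in> Pl l"
  by (simp add: Pl_def)

lemma Pl_smult: "f \<in> Pl l \<Longrightarrow> c \<noteq> 0 \<Longrightarrow> smult c f \<in> Pl l"
  by (simp add: Pl_def)

lemma Pl_ptilde: "f \<in> Pl l \<Longrightarrow> ptilde f \<in> Pl l"
  by (simp add: Pl_def coeff_ptilde)

lemma Pl_pdagger: "f \<in> Pl l \<Longrightarrow> pdagger f \<in> Pl l"
  by (simp add: Pl_def degree_pdagger coeff_pdagger) (metis leading_coeff_0_iff coeff_0 degree_0 not_gr_zero)

lemma ptilde_pdagger_Pl:
  assumes "f \<in> Pl l" "l > 0"
  shows "ptilde (pdagger f) = (if even l then - pdagger (ptilde f) else pdagger (ptilde f))"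
proof -
  have "(-1::complex) ^ (l - 1) = (if even l then -1 else 1)"
    using assms(2) by (cases l) auto
  then show ?thesis
    using assms(1) ptilde_pdagger [of f] by (auto simp: Pl_def)
qed

lemma ptilde_Pl_1:
  assumes "f \<in> Pl 1"
  shows "ptilde f = f"
proof -
  have "coeff (ptilde f) n = coeff f n" for n
    using assms by (cases n) (auto simp: coeff_ptilde Pl_def coeff_eq_0)
  then show ?thesis by (simp add: poly_eq_iff)
qed

section \<open>Codes for the elements of \<open>Gll l\<close>\<close>

type_synonym code = "bool \<times> bool \<times> bool \<times> bool \<times> bool"

definition neg_if :: "bool \<Rightarrow> complex poly \<Rightarrow> complex poly" where
  "neg_if e f = (if e then - f else f)"

definition tilde_dagger :: "bool \<Rightarrow> bool \<Rightarrow> complex poly \<Rightarrow> complex poly" where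
  "tilde_dagger h r f = (if r then pdagger (if h then ptilde f else f) else (if h then ptilde f else f))"

text \<open>The code \<open>(sw, a, b, h, r)\<close> stands for \<open>n\<^sup>a (s n s)\<^sup>b r\<^sup>r h\<^sup>h s\<^sup>s\<^sup>w\<close>, see \<open>code_as_word\<close>.\<close>

fun code_act :: "code \<Rightarrow> complex poly \<times> complex poly \<Rightarrow> complex poly \<times> complex poly" where
  "code_act (sw, a, b, h, r) (f, g) =
     (if sw then (neg_if a (tilde_dagger h r g), neg_if b (tilde_dagger h r f))
      else (neg_if a (tilde_dagger h r f), neg_if b (tilde_dagger h r g)))"

text \<open>The sign \<open>even l \<and> h \<and> r'\<close> comes from \<open>ptilde (pdagger f) = (-1)^(l-1) pdagger (ptilde f)\<close>
  on \<open>Pl l\<close>, see \<open>ptilde_pdagger_Pl\<close>.\<close>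

fun code_mult :: "nat \<Rightarrow> code \<Rightarrow> code \<Rightarrow> code" where
  "code_mult l (sw, a, b, h, r) (sw', a', b', h', r') =
     (sw \<noteq> sw',
      (a \<noteq> (if sw then b' else a')) \<noteq> (even l \<and> h \<and> r'),
      (b \<noteq> (if sw then a' else b')) \<noteq> (even l \<and> h \<and> r'),
      h \<noteq> h', r \<noteq> r')"

fun code_inv :: "nat \<Rightarrow> code \<Rightarrow> code" where
  "code_inv l (sw, a, b, h, r) =
     (sw, (if sw then b else a) \<noteq> (even l \<and> h \<and> r), (if sw then a else b) \<noteq> (even l \<and> h \<and> r), h, r)"

abbreviation code_one :: code where
  "code_one \<equiv> (False, False, False, False, False)"

lemma code_mult_one_left [simp]: "code_mult l code_one c = c"
  by (cases c) simp

lemma code_mult_one_right [simp]: "code_mult l c code_one = c"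
  by (cases c) simp

lemma code_mult_inv_left [simp]: "code_mult l (code_inv l c) c = code_one"
  by (cases c) auto

lemma code_mult_inv_right [simp]: "code_mult l c (code_inv l c) = code_one"
  by (cases c) auto

lemma code_inv_one [simp]: "code_inv l code_one = code_one"
  by simp

lemma Pl_neg_if: "f \<in> Pl l \<Longrightarrow> neg_if e f \<in> Pl l"
  by (simp add: neg_if_def Pl_uminus)

lemma Pl_tilde_dagger: "f \<in> Pl l \<Longrightarrow> tilde_dagger h r f \<in> Pl l"
  by (simp add: tilde_dagger_def Pl_ptilde Pl_pdagger)

lemma code_act_Pl: "x \<in> Pl l \<times> Pl l \<Longrightarrow> code_act c x \<in> Pl l \<times> Pl l"
  by (cases c; cases x) (auto simp: Pl_neg_if Pl_tilde_dagger)

lemma tilde_dagger_neg_if: "tilde_dagger h r (neg_if e f) = neg_if e (tilde_dagger h r f)"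
  by (simp add: tilde_dagger_def neg_if_def)

lemma neg_if_neg_if: "neg_if a (neg_if b f) = neg_if (a \<noteq> b) f"
  by (simp add: neg_if_def)

lemma tilde_dagger_tilde_dagger:
  assumes "f \<in> Pl l" "l > 0"
  shows "tilde_dagger h r (tilde_dagger h' r' f) = neg_if (even l \<and> h \<and> r') (tilde_dagger (h \<noteq> h') (r \<noteq> r') f)"
proof -
  have "coeff f 0 \<noteq> 0" "coeff (ptilde f) 0 \<noteq> 0"
    using assms(1) Pl_ptilde by (auto simp: Pl_def)
  then show ?thesis
    using ptilde_pdagger_Pl [OF assms] ptilde_pdagger_Pl [OF Pl_ptilde [OF assms(1)] assms(2)]
      pdagger_pdagger
    by (cases h; cases r; cases h'; cases r') (auto simp: tilde_dagger_def neg_if_def)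
qed

lemma code_act_mult:
  assumes "x \<in> Pl l \<times> Pl l" "l > 0"
  shows "code_act c (code_act c' x) = code_act (code_mult l c c') x"
proof -
  obtain f g where x: "x = (f, g)" "f \<in> Pl l" "g \<in> Pl l" using assms(1) by auto
  obtain sw a b h r where c: "c = (sw, a, b, h, r)" by (cases c) auto
  obtain sw' a' b' h' r' where c': "c' = (sw', a', b', h', r')" by (cases c') auto
  show ?thesis
    unfolding x c c'
    by (cases sw; cases sw')
      (auto simp: tilde_dagger_neg_if neg_if_neg_if tilde_dagger_tilde_dagger [OF x(2) assms(2)]
        tilde_dagger_tilde_dagger [OF x(3) assms(2)] intro!: arg_cong2 [where f = neg_if])
qed

lemma code_act_one [simp]: "code_act code_one x = x"
  by (cases x) (simp add: neg_if_def tilde_dagger_def)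

definition code_perm :: "nat \<Rightarrow> code \<Rightarrow> complex poly \<times> complex poly \<Rightarrow> complex poly \<times> complex poly" where
  "code_perm l c = restrict (code_act c) (Pl l \<times> Pl l)"

lemma code_perm_in_BijGroup:
  assumes "l > 0"
  shows "code_perm l c \<in> carrier (BijGroup (Pl l \<times> Pl l))"
proof -
  have "bij_betw (code_act c) (Pl l \<times> Pl l) (Pl l \<times> Pl l)"
  proof (rule bij_betw_byWitness [where f' = "code_act (code_inv l c)"])
    show "\<forall>x\<in>Pl l \<times> Pl l. code_act (code_inv l c) (code_act c x) = x"
      using code_act_mult [OF _ assms, of _ "code_inv l c" c] by simp
    show "\<forall>x\<in>Pl l \<times> Pl l. code_act c (code_act (code_inv l c) x) = x"
      using code_act_mult [OF _ assms, of _ c "code_inv l c"] by simp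
  qed (use code_act_Pl in blast)+
  then have "bij_betw (code_perm l c) (Pl l \<times> Pl l) (Pl l \<times> Pl l)"
    unfolding code_perm_def by (rule bij_betw_cong [THEN iffD1, rotated]) auto
  then show ?thesis by (simp add: BijGroup_def Bij_def code_perm_def)
qed

lemma code_perm_mult:
  assumes "l > 0"
  shows "code_perm l c \<otimes>\<^bsub>BijGroup (Pl l \<times> Pl l)\<^esub> code_perm l c' = code_perm l (code_mult l c c')"
  using code_perm_in_BijGroup [OF assms]
  by (auto simp: BijGroup_def compose_def code_perm_def code_act_mult [OF _ assms] code_act_Pl
      simp del: code_act.simps code_mult.simps)

lemma code_perm_one: "\<one>\<^bsub>BijGroup (Pl l \<times> Pl l)\<^esub> = code_perm l code_one"
  by (auto simp: BijGroup_def code_perm_def simp del: code_act.simps)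

lemma code_perm_inv:
  assumes "l > 0"
  shows "inv\<^bsub>BijGroup (Pl l \<times> Pl l)\<^esub> (code_perm l c) = code_perm l (code_inv l c)"
  by (rule group.inv_equality [OF group_BijGroup])
    (simp_all add: code_perm_mult [OF assms] code_perm_one code_perm_in_BijGroup [OF assms]
      del: code_mult.simps code_inv.simps)

lemma subgroup_range_code_perm:
  assumes "l > 0"
  shows "subgroup (range (code_perm l)) (BijGroup (Pl l \<times> Pl l))"
  by (rule subgroup.intro)
    (use code_perm_in_BijGroup [OF assms] code_perm_mult [OF assms] code_perm_one code_perm_inv [OF assms]
      in \<open>auto simp del: code_mult.simps code_inv.simps\<close>)

abbreviation code_s :: code where "code_s \<equiv> (True, False, False, False, False)"
abbreviation code_n :: code where "code_n \<equiv> (False, True, False, False, False)"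
abbreviation code_h :: code where "code_h \<equiv> (False, False, False, True, False)"
abbreviation code_r :: code where "code_r \<equiv> (False, False, False, False, True)"
abbreviation code_ns :: code where "code_ns \<equiv> (True, True, False, False, False)"
abbreviation code_rh :: code where "code_rh \<equiv> (False, False, False, True, True)"

lemma sG_eq: "sG l = code_perm l code_s"
  by (auto simp: sG_def code_perm_def smap_def neg_if_def tilde_dagger_def)

lemma nG_eq: "nG l = code_perm l code_n"
  by (auto simp: nG_def code_perm_def nmap_def neg_if_def tilde_dagger_def)

lemma hG_eq: "hG l = code_perm l code_h"
  by (auto simp: hG_def code_perm_def hmap_def neg_if_def tilde_dagger_def)

lemma rG_eq: "rG l = code_perm l code_r"
  by (auto simp: rG_def code_perm_def rmap_def neg_if_def tilde_dagger_def)

definition code_if :: "bool \<Rightarrow> code \<Rightarrow> code" where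
  "code_if e c = (if e then c else code_one)"

lemma code_as_word:
  "(sw, a, b, h, r) =
     code_mult l (code_mult l (code_mult l (code_mult l (code_if a code_n)
       (code_if b (code_mult l (code_mult l code_s code_n) code_s))) (code_if r code_r)) (code_if h code_h))
       (code_if sw code_s)"
  by (cases sw; cases a; cases b; cases h; cases r) (simp_all add: code_if_def)

lemma code_set_closed_eq_UNIV:
  assumes "code_one \<in> C" "\<And>c c'. c \<in> C \<Longrightarrow> c' \<in> C \<Longrightarrow> code_mult l c c' \<in> C"
    and "code_s \<in> C" "code_n \<in> C" "code_h \<in> C" "code_r \<in> C"
  shows "C = UNIV"
proof -
  have code_if: "code_if e c \<in> C" if "c \<in> C" for e c
    using that assms(1) by (simp add: code_if_def)
  have "(sw, a, b, h, r) \<in> C" for sw a b h r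
    by (subst code_as_word [of _ _ _ _ _ l]) (intro assms(2) code_if assms(3-6))
  then show ?thesis by auto
qed

lemma carrier_Gll:
  assumes "l > 0"
  shows "carrier (Gll l) = range (code_perm l)"
proof -
  let ?S = "{sG l, nG l, hG l, rG l}"
  let ?X = "generate (BijGroup (Pl l \<times> Pl l)) ?S"
  have S: "?S \<subseteq> carrier (BijGroup (Pl l \<times> Pl l))"
    using code_perm_in_BijGroup [OF assms] by (simp add: sG_eq nG_eq hG_eq rG_eq)
  have X: "subgroup ?X (BijGroup (Pl l \<times> Pl l))"
    using group.generate_is_subgroup [OF group_BijGroup S] .
  have "{c. code_perm l c \<in> ?X} = UNIV"
  proof (rule code_set_closed_eq_UNIV)
    show "code_one \<in> {c. code_perm l c \<in> ?X}"
      using subgroup.one_closed [OF X] by (simp add: code_perm_one)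
    show "code_mult l c c' \<in> {c. code_perm l c \<in> ?X}" if "c \<in> {c. code_perm l c \<in> ?X}" "c' \<in> {c. code_perm l c \<in> ?X}" for c c'
      using that by (metis (mono_tags) mem_Collect_eq subgroup.m_closed [OF X] code_perm_mult [OF assms])
  qed (auto intro: generate.incl simp: sG_eq [symmetric] nG_eq [symmetric] hG_eq [symmetric] rG_eq [symmetric])
  then have "range (code_perm l) \<subseteq> ?X" by blast
  moreover have "?X \<subseteq> range (code_perm l)"
    by (rule group.generate_subgroup_incl [OF group_BijGroup _ subgroup_range_code_perm [OF assms]])
      (auto simp: sG_eq nG_eq hG_eq rG_eq)
  ultimately show ?thesis
    unfolding Gll_def carrier_subgroup_generated using S by (simp add: Int_absorb1)
qed

lemma group_Gll: "group (Gll l)"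
  unfolding Gll_def by (rule group.group_subgroup_generated [OF group_BijGroup])

lemma code_perm_mult_Gll:
  "l > 0 \<Longrightarrow> code_perm l c \<otimes>\<^bsub>Gll l\<^esub> code_perm l c' = code_perm l (code_mult l c c')"
  unfolding Gll_def by (simp add: code_perm_mult del: code_mult.simps)

lemma one_Gll: "\<one>\<^bsub>Gll l\<^esub> = code_perm l code_one"
  unfolding Gll_def by (simp add: code_perm_one)

lemma code_perm_inv_Gll:
  assumes "l > 0"
  shows "inv\<^bsub>Gll l\<^esub> (code_perm l c) = code_perm l (code_inv l c)"
  using carrier_Gll [OF assms] unfolding Gll_def
  by (simp add: group.inv_subgroup_generated [OF group_BijGroup] code_perm_inv [OF assms]
      del: code_inv.simps)

section \<open>Faithfulness\<close>

lemma tilde_dagger_smult_real: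
  "tilde_dagger h r (smult (of_real x) f) = smult (of_real x) (tilde_dagger h r f)"
  by (simp add: tilde_dagger_def ptilde_smult pdagger_smult)

lemma tilde_dagger_smult_ii:
  "tilde_dagger h True (smult \<i> f) = smult (- \<i>) (tilde_dagger h True f)"
  by (simp add: tilde_dagger_def ptilde_smult pdagger_smult)

lemma neg_if_uminus: "neg_if e (- f) = - neg_if e f"
  by (simp add: neg_if_def)

lemma neg_if_smult: "neg_if e (smult c f) = smult c (neg_if e f)"
  by (simp add: neg_if_def)

lemma degree_eqI_coeff:
  "coeff p n \<noteq> 0 \<Longrightarrow> (\<And>i. i > n \<Longrightarrow> coeff p i = 0) \<Longrightarrow> degree p = n"
  by (meson degree_le le_antisym le_degree)

lemma Pl_one_plus_monom: "[:1:] + monom 1 (l - 1) \<in> Pl l"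
  unfolding Pl_def
  by (auto intro!: degree_eqI_coeff simp: coeff_monom coeff_pCons split: nat.split nat.split_asm)

lemma Pl_one_plus_z_plus_monom: "l \<ge> 2 \<Longrightarrow> [:1, 1:] + monom 1 (l - 1) \<in> Pl l"
  unfolding Pl_def
  by (auto intro!: degree_eqI_coeff simp: coeff_monom coeff_pCons split: nat.split nat.split_asm)

lemma fixes_Pl_neg_if_tilde_dagger:
  assumes "l > 0" and fixed: "\<And>f. f \<in> Pl l \<Longrightarrow> neg_if a (tilde_dagger h r f) = f"
  shows "\<not> a \<and> \<not> r \<and> (h \<longrightarrow> l = 1)"
proof -
  define u :: "complex poly" where "u = [:1:] + monom 1 (l - 1)"
  have u: "u \<in> Pl l" unfolding u_def by (rule Pl_one_plus_monom)
  have "\<not> r"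
  proof
    assume r
    have "smult \<i> u = neg_if a (tilde_dagger h r (smult \<i> u))"
      using fixed [of "smult \<i> u"] Pl_smult [OF u] by simp
    also have "\<dots> = smult (- \<i>) u"
      using \<open>r\<close> fixed [OF u] by (simp add: tilde_dagger_smult_ii neg_if_smult neg_if_uminus)
    finally have "coeff (smult \<i> u) 0 = coeff (smult (- \<i>) u) 0" by simp
    then show False using u by (simp add: Pl_def)
  qed
  moreover have "\<not> a"
  proof
    assume a
    have "coeff (neg_if a (tilde_dagger h r u)) 0 = - coeff u 0"
      using \<open>\<not> r\<close> \<open>a\<close> by (simp add: neg_if_def tilde_dagger_def coeff_ptilde)
    then show False using fixed [OF u] u by (simp add: Pl_def)
  qed
  moreover have "l = 1" if h
  proof (rule ccontr)
    assume "l \<noteq> 1"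
    define w :: "complex poly" where "w = [:1, 1:] + monom 1 (l - 1)"
    have "w \<in> Pl l"
      using \<open>l \<noteq> 1\<close> assms(1) Pl_one_plus_z_plus_monom unfolding w_def by simp
    then have "ptilde w = w"
      using fixed \<open>\<not> r\<close> \<open>\<not> a\<close> \<open>h\<close> by (simp add: neg_if_def tilde_dagger_def)
    then have "poly w (-1) = poly w 1" by (metis poly_ptilde)
    then have "norm ((-1::complex) ^ (l - 1)) = 3" by (simp add: w_def poly_monom)
    then show False by (simp add: norm_power)
  qed
  ultimately show ?thesis by blast
qed

lemma swap_code_act_not_id:
  assumes fixed: "\<And>x. x \<in> Pl l \<times> Pl l \<Longrightarrow> code_act (True, a, b, h, r) x = x"
  shows False
proof -
  \<comment> \<open>fixing \<open>(u, 2 u)\<close> would give \<open>u = \<plusminus>4 u\<close>\<close>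
  define u :: "complex poly" where "u = [:1:] + monom 1 (l - 1)"
  have u: "u \<in> Pl l" unfolding u_def by (rule Pl_one_plus_monom)
  have T2: "tilde_dagger h r (smult 2 u) = smult 2 (tilde_dagger h r u)"
    using tilde_dagger_smult_real [of h r 2 u] by simp
  have "smult 2 u \<in> Pl l" using Pl_smult [OF u] by simp
  then have first: "u = neg_if a (tilde_dagger h r (smult 2 u))"
    and second: "smult 2 u = neg_if b (tilde_dagger h r u)"
    using fixed [of "(u, smult 2 u)"] u by simp_all
  have "u = smult 2 (neg_if a (tilde_dagger h r u))"
    using first by (simp add: T2 neg_if_smult)
  also have "tilde_dagger h r u = neg_if b (smult 2 u)"
    using arg_cong [OF second, of "neg_if b"] by (simp add: neg_if_neg_if neg_if_def)
  finally have "u = smult 4 (neg_if (a \<noteq> b) u)"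
    by (simp add: neg_if_smult neg_if_neg_if)
  then have "coeff u 0 = 4 * coeff (neg_if (a \<noteq> b) u) 0"
    by (metis coeff_smult)
  then have "(if a \<noteq> b then 5 else - 3) * coeff u 0 = 0"
    by (cases "a = b") (simp_all add: neg_if_def algebra_simps)
  then show False using u by (simp add: Pl_def split: if_splits)
qed

lemma code_perm_eq_one_iff:
  assumes "l > 0"
  shows "code_perm l c = code_perm l code_one \<longleftrightarrow> c = code_one \<or> (l = 1 \<and> c = code_h)"
proof
  assume eq: "code_perm l c = code_perm l code_one"
  obtain sw a b h r where c: "c = (sw, a, b, h, r)" by (cases c) auto
  have fixed: "code_act c x = x" if "x \<in> Pl l \<times> Pl l" for x
    using fun_cong [OF eq, of x] that by (simp add: code_perm_def del: code_act.simps)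
  have "\<not> sw"
  proof
    assume sw
    have "code_act (True, a, b, h, r) x = x" if "x \<in> Pl l \<times> Pl l" for x
      using fixed [OF that] c \<open>sw\<close> by (simp del: code_act.simps)
    then show False by (rule swap_code_act_not_id)
  qed
  then have "neg_if a (tilde_dagger h r f) = f \<and> neg_if b (tilde_dagger h r f) = f" if "f \<in> Pl l" for f
    using fixed [of "(f, f)"] that c by simp
  then show "c = code_one \<or> (l = 1 \<and> c = code_h)"
    using fixes_Pl_neg_if_tilde_dagger [OF assms, of a h r] fixes_Pl_neg_if_tilde_dagger [OF assms, of b h r]
      \<open>\<not> sw\<close> c by auto
next
  assume "c = code_one \<or> (l = 1 \<and> c = code_h)"
  then show "code_perm l c = code_perm l code_one"
    by (auto simp: code_perm_def neg_if_def tilde_dagger_def ptilde_Pl_1)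
qed

lemma code_mult_inv_eq_one_iff: "code_mult l c (code_inv l c') = code_one \<longleftrightarrow> c = c'"
  by (cases c; cases c') (auto split: if_splits)

lemma inj_on_code_perm:
  assumes "l > 0" and no_tilde: "l = 1 \<Longrightarrow> S \<subseteq> {(sw, a, b, False, r) | sw a b r. True}"
  shows "inj_on (code_perm l) S"
proof (rule inj_onI)
  fix c c' assume cc': "c \<in> S" "c' \<in> S" "code_perm l c = code_perm l c'"
  have "code_perm l (code_mult l c (code_inv l c')) = code_perm l code_one"
    using code_perm_mult [OF assms(1), of c "code_inv l c'"] code_perm_mult [OF assms(1), of c' "code_inv l c'"]
      cc'(3) by (metis code_mult_inv_right)
  moreover have "code_mult l c (code_inv l c') \<noteq> code_h" if l1: "l = 1"
  proof -
    obtain sw a b r where "c = (sw, a, b, False, r)"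
      using no_tilde [OF l1] cc'(1) by auto
    moreover obtain sw' a' b' r' where "c' = (sw', a', b', False, r')"
      using no_tilde [OF l1] cc'(2) by auto
    ultimately show ?thesis by simp
  qed
  ultimately have "code_mult l c (code_inv l c') = code_one"
    using code_perm_eq_one_iff [OF assms(1)] by metis
  then show "c = c'" by (simp only: code_mult_inv_eq_one_iff)
qed

lemma inj_code_perm: "l \<ge> 2 \<Longrightarrow> inj (code_perm l)"
  by (rule inj_on_code_perm) auto

lemma subgroup_code_perm_image:
  assumes "l > 0" "code_one \<in> C" "\<And>c c'. c \<in> C \<Longrightarrow> c' \<in> C \<Longrightarrow> code_mult l c c' \<in> C"
    and "\<And>c. c \<in> C \<Longrightarrow> code_inv l c \<in> C"
  shows "subgroup (code_perm l ` C) (Gll l)"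
  by (rule subgroup.intro)
    (use assms carrier_Gll [OF assms(1)] code_perm_mult_Gll [OF assms(1)] one_Gll code_perm_inv_Gll [OF assms(1)]
      in \<open>auto simp del: code_mult.simps code_inv.simps\<close>)

lemma normal_code_perm_image:
  assumes "l > 0" "subgroup (code_perm l ` C) (Gll l)"
    and "\<And>c d. d \<in> C \<Longrightarrow> code_mult l (code_mult l c d) (code_inv l c) \<in> C"
  shows "code_perm l ` C \<lhd> Gll l"
  unfolding group.normal_inv_iff [OF group_Gll]
  using assms carrier_Gll [OF assms(1)] code_perm_mult_Gll [OF assms(1)] code_perm_inv_Gll [OF assms(1)]
  by (auto simp del: code_mult.simps code_inv.simps)

lemma code_perm_mult_mem_generate:
  assumes "l > 0" "A \<subseteq> carrier (Gll l)"
    and "code_perm l c \<in> generate (Gll l) A" "code_perm l c' \<in> generate (Gll l) A"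
  shows "code_perm l (code_mult l c c') \<in> generate (Gll l) A"
  using generate.eng [OF assms(3,4)] code_perm_mult_Gll [OF assms(1)] by simp

lemma code_perm_if_mem_generate:
  "code_perm l c \<in> generate (Gll l) A \<Longrightarrow> code_perm l (code_if e c) \<in> generate (Gll l) A"
  using generate.one [of "Gll l" A] by (simp add: code_if_def one_Gll)

lemma set_mult_code_perm_image:
  assumes "l > 0"
  shows "code_perm l ` B <#>\<^bsub>Gll l\<^esub> code_perm l ` C = code_perm l ` {code_mult l b c | b c. b \<in> B \<and> c \<in> C}"
proof (intro equalityI subsetI)
  fix x assume "x \<in> code_perm l ` B <#>\<^bsub>Gll l\<^esub> code_perm l ` C"
  then obtain b c where "b \<in> B" "c \<in> C" "x = code_perm l b \<otimes>\<^bsub>Gll l\<^esub> code_perm l c"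
    unfolding set_mult_def by blast
  then show "x \<in> code_perm l ` {code_mult l b c | b c. b \<in> B \<and> c \<in> C}"
    using code_perm_mult_Gll [OF assms] by blast
next
  fix x assume "x \<in> code_perm l ` {code_mult l b c | b c. b \<in> B \<and> c \<in> C}"
  then obtain b c where "b \<in> B" "c \<in> C" "x = code_perm l (code_mult l b c)" by blast
  then show "x \<in> code_perm l ` B <#>\<^bsub>Gll l\<^esub> code_perm l ` C"
    using code_perm_mult_Gll [OF assms, of b c] unfolding set_mult_def by blast
qed

lemma ord_code_perm_eq_2:
  assumes "l > 0" "code_mult l c c = code_one" "c \<noteq> code_one" "\<not> (l = 1 \<and> c = code_h)"
  shows "group.ord (Gll l) (code_perm l c) = 2"
  by (rule group.ord_eq_2I [OF group_Gll])
    (use assms carrier_Gll [OF assms(1)] code_perm_eq_one_iff [OF assms(1)] in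
      \<open>auto simp: code_perm_mult_Gll one_Gll simp del: code_mult.simps\<close>)

lemma ord_code_perm_eq_4:
  assumes "l > 0" "code_mult l (code_mult l c c) (code_mult l c c) = code_one"
    and "code_mult l c c \<noteq> code_one" "\<not> (l = 1 \<and> code_mult l c c = code_h)"
  shows "group.ord (Gll l) (code_perm l c) = 4"
  by (rule group.ord_eq_4I [OF group_Gll])
    (use assms carrier_Gll [OF assms(1)] code_perm_eq_one_iff [OF assms(1)] in
      \<open>auto simp: code_perm_mult_Gll one_Gll simp del: code_mult.simps\<close>)

definition D_codes :: "code set" where
  "D_codes = {(sw, a, b, False, False) | sw a b. True}"

definition Delta_codes :: "code set" where
  "Delta_codes = {(False, e, e, h, r) | e h r. True}"

lemma ns_eq: "l > 0 \<Longrightarrow> nG l \<otimes>\<^bsub>Gll l\<^esub> sG l = code_perm l code_ns"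
  by (simp add: nG_eq sG_eq code_perm_mult_Gll)

lemma rh_eq: "l > 0 \<Longrightarrow> rG l \<otimes>\<^bsub>Gll l\<^esub> hG l = code_perm l code_rh"
  by (simp add: rG_eq hG_eq code_perm_mult_Gll)

lemma D_codes_mult_closed: "c \<in> D_codes \<Longrightarrow> c' \<in> D_codes \<Longrightarrow> code_mult l c c' \<in> D_codes"
  by (auto simp: D_codes_def)

lemma subgroup_D_codes: "l > 0 \<Longrightarrow> subgroup (code_perm l ` D_codes) (Gll l)"
  by (rule subgroup_code_perm_image) (auto simp: D_codes_def)

lemma subgroup_Delta_codes: "l > 0 \<Longrightarrow> subgroup (code_perm l ` Delta_codes) (Gll l)"
  by (rule subgroup_code_perm_image) (auto simp: Delta_codes_def)

lemma generate_ns_s: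
  assumes "l > 0"
  shows "generate (Gll l) {nG l \<otimes>\<^bsub>Gll l\<^esub> sG l, sG l} = code_perm l ` D_codes"
proof
  let ?A = "{nG l \<otimes>\<^bsub>Gll l\<^esub> sG l, sG l}"
  have A: "?A = code_perm l ` {code_ns, code_s}"
    by (simp only: ns_eq [OF assms]) (simp add: sG_eq)
  show "generate (Gll l) ?A \<subseteq> code_perm l ` D_codes"
    by (rule group.generate_subgroup_incl [OF group_Gll _ subgroup_D_codes [OF assms]])
      (auto simp: A D_codes_def)
  have "?A \<subseteq> carrier (Gll l)" using carrier_Gll [OF assms] by (auto simp: A)
  note mult = code_perm_mult_mem_generate [OF assms this] and opt = code_perm_if_mem_generate
  have ns: "code_perm l code_ns \<in> generate (Gll l) ?A"
    and s: "code_perm l code_s \<in> generate (Gll l) ?A"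
    by (auto intro: generate.incl simp: A)
  have n: "code_perm l code_n \<in> generate (Gll l) ?A" using mult [OF ns s] by simp
  have n': "code_perm l (False, False, True, False, False) \<in> generate (Gll l) ?A"
    using mult [OF mult [OF s n] s] by simp
  have word: "(sw, a, b, False, False) =
      code_mult l (code_mult l (code_if a code_n) (code_if b (False, False, True, False, False))) (code_if sw code_s)"
    for sw a b by (cases sw; cases a; cases b) (simp_all add: code_if_def)
  show "code_perm l ` D_codes \<subseteq> generate (Gll l) ?A"
  proof clarify
    fix c assume "c \<in> D_codes"
    then obtain sw a b where "c = (sw, a, b, False, False)" by (auto simp: D_codes_def)
    then show "code_perm l c \<in> generate (Gll l) ?A"
      by (simp only:) (subst word, intro mult opt n n' s)
  qed
qed

lemma generate_rh_h:
  assumes "l > 0" "even l"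
  shows "generate (Gll l) {rG l \<otimes>\<^bsub>Gll l\<^esub> hG l, hG l} = code_perm l ` Delta_codes"
proof
  let ?A = "{rG l \<otimes>\<^bsub>Gll l\<^esub> hG l, hG l}"
  have A: "?A = code_perm l ` {code_rh, code_h}"
    by (simp only: rh_eq [OF assms(1)]) (simp add: hG_eq)
  show "generate (Gll l) ?A \<subseteq> code_perm l ` Delta_codes"
    by (rule group.generate_subgroup_incl [OF group_Gll _ subgroup_Delta_codes [OF assms(1)]])
      (auto simp: A Delta_codes_def)
  have "?A \<subseteq> carrier (Gll l)" using carrier_Gll [OF assms(1)] by (auto simp: A)
  note mult = code_perm_mult_mem_generate [OF assms(1) this] and opt = code_perm_if_mem_generate
  have rh: "code_perm l code_rh \<in> generate (Gll l) ?A"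
    and h: "code_perm l code_h \<in> generate (Gll l) ?A"
    by (auto intro: generate.incl simp: A)
  have r: "code_perm l code_r \<in> generate (Gll l) ?A" using mult [OF rh h] by simp
  have z: "code_perm l (False, True, True, False, False) \<in> generate (Gll l) ?A"
    using mult [OF rh rh] assms(2) by simp
  have word: "(False, e, e, h, r) =
      code_mult l (code_mult l (code_if e (False, True, True, False, False)) (code_if r code_r)) (code_if h code_h)"
    for e h r by (cases e; cases h; cases r) (simp_all add: code_if_def)
  show "code_perm l ` Delta_codes \<subseteq> generate (Gll l) ?A"
  proof clarify
    fix c assume "c \<in> Delta_codes"
    then obtain e h r where "c = (False, e, e, h, r)" by (auto simp: Delta_codes_def)
    then show "code_perm l c \<in> generate (Gll l) ?A"
      by (simp only:) (subst word, intro mult opt z r h)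
  qed
qed

lemma generate_code_perm_involution:
  assumes "l > 0" "code_mult l c c = code_one"
  shows "generate (Gll l) {code_perm l c} = code_perm l ` {code_one, c}"
proof
  have inv: "code_inv l c = c"
    using assms(2) by (cases c) (auto split: if_splits)
  show "generate (Gll l) {code_perm l c} \<subseteq> code_perm l ` {code_one, c}"
    by (rule group.generate_subgroup_incl [OF group_Gll _ subgroup_code_perm_image [OF assms(1)]])
      (use assms(2) inv in \<open>auto simp del: code_mult.simps code_inv.simps\<close>)
  show "code_perm l ` {code_one, c} \<subseteq> generate (Gll l) {code_perm l c}"
    using generate.one [of "Gll l" "{code_perm l c}"] generate.incl [of "code_perm l c" "{code_perm l c}" "Gll l"]
    by (auto simp: one_Gll)
qed

lemma D_codes_explicit:
  "D_codes = {(False, False, False, False, False), (False, False, True, False, False),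
    (False, True, False, False, False), (False, True, True, False, False),
    (True, False, False, False, False), (True, False, True, False, False),
    (True, True, False, False, False), (True, True, True, False, False)}"
  by (auto simp: D_codes_def)

lemma Delta_codes_explicit:
  "Delta_codes = {(False, False, False, False, False), (False, False, False, False, True),
    (False, False, False, True, False), (False, False, False, True, True),
    (False, True, True, False, False), (False, True, True, False, True),
    (False, True, True, True, False), (False, True, True, True, True)}"
proof -
  have "Delta_codes = {(False, e, e, h, r) | e h r. e \<in> {False, True} \<and> h \<in> {False, True} \<and> r \<in> {False, True}}"
    by (simp add: Delta_codes_def)
  also have "\<dots> = {(False, False, False, False, False), (False, False, False, False, True),
      (False, False, False, True, False), (False, False, False, True, True),
      (False, True, True, False, False), (False, True, True, False, True),
      (False, True, True, True, False), (False, True, True, True, True)}"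
    by blast
  finally show ?thesis .
qed

lemma card_D_codes: "card D_codes = 8"
  unfolding D_codes_explicit by simp

lemma card_Delta_codes: "card Delta_codes = 8"
  unfolding Delta_codes_explicit by simp

lemma normal_D_codes: "l > 0 \<Longrightarrow> code_perm l ` D_codes \<lhd> Gll l"
  by (rule normal_code_perm_image [OF _ subgroup_D_codes]) (auto simp: D_codes_def)

lemma normal_h_codes: "l > 0 \<Longrightarrow> odd l \<Longrightarrow> code_perm l ` {code_one, code_h} \<lhd> Gll l"
  by (rule normal_code_perm_image [OF _ subgroup_code_perm_image]) (auto split: if_splits)

lemma normal_r_codes: "l > 0 \<Longrightarrow> odd l \<Longrightarrow> code_perm l ` {code_one, code_r} \<lhd> Gll l"
  by (rule normal_code_perm_image [OF _ subgroup_code_perm_image]) (auto split: if_splits)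

lemma dihedral_ns_s:
  assumes "l > 0"
  defines "ns \<equiv> nG l \<otimes>\<^bsub>Gll l\<^esub> sG l"
  shows "card (generate (Gll l) {ns, sG l}) = 8"
    and "group.ord (Gll l) ns = 4" "group.ord (Gll l) (sG l) = 2"
    and "sG l \<otimes>\<^bsub>Gll l\<^esub> ns \<otimes>\<^bsub>Gll l\<^esub> inv\<^bsub>Gll l\<^esub> (sG l) = inv\<^bsub>Gll l\<^esub> ns"
proof -
  have ns: "ns = code_perm l code_ns"
    unfolding ns_def by (rule ns_eq [OF assms(1)])
  have "inj_on (code_perm l) D_codes"
    by (rule inj_on_code_perm [OF assms(1)]) (auto simp: D_codes_def)
  then show "card (generate (Gll l) {ns, sG l}) = 8"
    unfolding ns_def generate_ns_s [OF assms(1)] by (simp add: card_image card_D_codes)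
  show "group.ord (Gll l) ns = 4"
    unfolding ns by (rule ord_code_perm_eq_4 [OF assms(1)]) simp_all
  show "group.ord (Gll l) (sG l) = 2"
    unfolding sG_eq by (rule ord_code_perm_eq_2 [OF assms(1)]) simp_all
  show "sG l \<otimes>\<^bsub>Gll l\<^esub> ns \<otimes>\<^bsub>Gll l\<^esub> inv\<^bsub>Gll l\<^esub> (sG l) = inv\<^bsub>Gll l\<^esub> ns"
    unfolding ns sG_eq by (simp add: code_perm_mult_Gll [OF assms(1)] code_perm_inv_Gll [OF assms(1)])
qed

lemma code_perm_1_tilde: "code_perm 1 (sw, a, b, h, r) = code_perm 1 (sw, a, b, False, r)"
  by (auto simp: code_perm_def tilde_dagger_def ptilde_Pl_1)

lemma direct_product_length_1:
  "internal_direct_product2 (Gll 1) (code_perm 1 ` D_codes) (code_perm 1 ` {code_one, code_r})"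
proof -
  have "inj_on (code_perm 1) (D_codes \<union> {code_one, code_r})"
    by (rule inj_on_code_perm) (auto simp: D_codes_def)
  then have "code_perm 1 ` D_codes \<inter> code_perm 1 ` {code_one, code_r} = code_perm 1 ` (D_codes \<inter> {code_one, code_r})"
    by (rule inj_on_image_Int [symmetric]) auto
  also have "D_codes \<inter> {code_one, code_r} = {code_one}" by (auto simp: D_codes_def)
  finally have meet: "code_perm 1 ` D_codes \<inter> code_perm 1 ` {code_one, code_r} = {\<one>\<^bsub>Gll 1\<^esub>}"
    by (simp add: one_Gll)
  have "range (code_perm 1) \<subseteq> code_perm 1 ` {code_mult 1 d c | d c. d \<in> D_codes \<and> c \<in> {code_one, code_r}}"
  proof clarify
    fix sw a b h r
    have "(sw, a, b, False, r) = code_mult 1 (sw, a, b, False, False) (code_if r code_r)"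
      by (cases r) (simp_all add: code_if_def)
    then have "code_perm 1 (sw, a, b, h, r) = code_perm 1 (code_mult 1 (sw, a, b, False, False) (code_if r code_r))"
      by (metis code_perm_1_tilde)
    moreover have "(sw, a, b, False, False) \<in> D_codes" by (simp add: D_codes_def)
    moreover have "code_if r code_r \<in> {code_one, code_r}" by (simp add: code_if_def)
    ultimately show "code_perm 1 (sw, a, b, h, r) \<in> code_perm 1 ` {code_mult 1 d c | d c. d \<in> D_codes \<and> c \<in> {code_one, code_r}}"
      by blast
  qed
  then have "code_perm 1 ` D_codes <#>\<^bsub>Gll 1\<^esub> code_perm 1 ` {code_one, code_r} = carrier (Gll 1)"
    unfolding set_mult_code_perm_image [OF zero_less_one] carrier_Gll [OF zero_less_one] by blast
  then show ?thesis
    unfolding internal_direct_product2_def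
    using meet normal_D_codes normal_r_codes by simp
qed

lemma direct_product_odd_length:
  assumes "odd l" "l > 1"
  shows "internal_direct_product3 (Gll l)
    (code_perm l ` D_codes) (code_perm l ` {code_one, code_h}) (code_perm l ` {code_one, code_r})"
proof -
  have l0: "l > 0" using assms(2) by simp
  have image_Int: "code_perm l ` A \<inter> code_perm l ` B = code_perm l ` (A \<inter> B)" for A B
    using inj_on_image_Int [OF inj_code_perm] assms(2) by simp
  note set_mult = set_mult_code_perm_image [OF l0]
  have pairs: "{f c c' | c c'. c \<in> C \<and> c' \<in> {u, v}} = (\<lambda>c. f c u) ` C \<union> (\<lambda>c. f c v) ` C"
    for f :: "code \<Rightarrow> code \<Rightarrow> code" and C u v by blast
  have meets:
    "D_codes \<inter> {code_mult l c c' | c c'. c \<in> {code_one, code_h} \<and> c' \<in> {code_one, code_r}} = {code_one}"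
    "{code_one, code_h} \<inter> {code_mult l c c' | c c'. c \<in> D_codes \<and> c' \<in> {code_one, code_r}} = {code_one}"
    "{code_one, code_r} \<inter> {code_mult l c c' | c c'. c \<in> D_codes \<and> c' \<in> {code_one, code_h}} = {code_one}"
    using assms(1) by (simp_all only: pairs D_codes_explicit) auto
  let ?DH = "{code_mult l c c' | c c'. c \<in> D_codes \<and> c' \<in> {code_one, code_h}}"
  have "range (code_perm l) \<subseteq> code_perm l ` {code_mult l c c' | c c'. c \<in> ?DH \<and> c' \<in> {code_one, code_r}}"
  proof clarify
    fix sw a b h r
    have "(sw, a, b, h, r) =
        code_mult l (code_mult l (sw, a, b, False, False) (code_if h code_h)) (code_if r code_r)"
      using assms(1) by (cases h; cases r) (simp_all add: code_if_def)
    moreover have "(sw, a, b, False, False) \<in> D_codes" by (simp add: D_codes_def)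
    moreover have "code_if h code_h \<in> {code_one, code_h}" "code_if r code_r \<in> {code_one, code_r}"
      by (simp_all add: code_if_def)
    ultimately show "code_perm l (sw, a, b, h, r) \<in>
        code_perm l ` {code_mult l c c' | c c'. c \<in> ?DH \<and> c' \<in> {code_one, code_r}}"
      by blast
  qed
  then have "code_perm l ` D_codes <#>\<^bsub>Gll l\<^esub> code_perm l ` {code_one, code_h} <#>\<^bsub>Gll l\<^esub>
      code_perm l ` {code_one, code_r} = carrier (Gll l)"
    unfolding set_mult carrier_Gll [OF l0] by blast
  then show ?thesis
    unfolding internal_direct_product3_def set_mult image_Int meets
    using normal_D_codes [OF l0] normal_h_codes [OF l0 assms(1)] normal_r_codes [OF l0 assms(1)]
    by (simp add: one_Gll)
qed

lemma dihedral_rh_h: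
  assumes "l > 0" "even l"
  defines "rh \<equiv> rG l \<otimes>\<^bsub>Gll l\<^esub> hG l"
  shows "card (generate (Gll l) {rh, hG l}) = 8"
    and "group.ord (Gll l) rh = 4" "group.ord (Gll l) (hG l) = 2"
    and "hG l \<otimes>\<^bsub>Gll l\<^esub> rh \<otimes>\<^bsub>Gll l\<^esub> inv\<^bsub>Gll l\<^esub> (hG l) = inv\<^bsub>Gll l\<^esub> rh"
proof -
  have l2: "l \<ge> 2" using assms(1,2) by (auto elim: evenE)
  have rh: "rh = code_perm l code_rh"
    unfolding rh_def by (rule rh_eq [OF assms(1)])
  show "card (generate (Gll l) {rh, hG l}) = 8"
    unfolding rh_def generate_rh_h [OF assms(1,2)]
    using card_image [OF inj_on_subset [OF inj_code_perm [OF l2]]] card_Delta_codes by simp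
  show "group.ord (Gll l) rh = 4"
    unfolding rh by (rule ord_code_perm_eq_4 [OF assms(1)]) (use assms(2) in simp_all)
  show "group.ord (Gll l) (hG l) = 2"
    unfolding hG_eq by (rule ord_code_perm_eq_2 [OF assms(1)]) (use l2 in simp_all)
  show "hG l \<otimes>\<^bsub>Gll l\<^esub> rh \<otimes>\<^bsub>Gll l\<^esub> inv\<^bsub>Gll l\<^esub> (hG l) = inv\<^bsub>Gll l\<^esub> rh"
    unfolding rh hG_eq using assms(2)
    by (simp add: code_perm_mult_Gll [OF assms(1)] code_perm_inv_Gll [OF assms(1)])
qed

lemma central_product_even_length:
  assumes "l > 0" "even l"
  shows "internal_central_product (Gll l) (code_perm l ` D_codes) (code_perm l ` Delta_codes)"
  unfolding internal_central_product_def
proof (intro conjI ballI)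
  show "subgroup (code_perm l ` D_codes) (Gll l)" by (rule subgroup_D_codes [OF assms(1)])
  show "subgroup (code_perm l ` Delta_codes) (Gll l)" by (rule subgroup_Delta_codes [OF assms(1)])
  show "x \<otimes>\<^bsub>Gll l\<^esub> y = y \<otimes>\<^bsub>Gll l\<^esub> x" if x: "x \<in> code_perm l ` D_codes" and y: "y \<in> code_perm l ` Delta_codes" for x y
  proof -
    obtain c c' where "c \<in> D_codes" "c' \<in> Delta_codes" "x = code_perm l c" "y = code_perm l c'"
      using x y by blast
    moreover have "code_mult l c c' = code_mult l c' c" if "c \<in> D_codes" "c' \<in> Delta_codes" for c c'
      using that assms(2) by (auto simp: D_codes_def Delta_codes_def)
    ultimately show ?thesis by (simp add: code_perm_mult_Gll [OF assms(1)] del: code_mult.simps)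
  qed
  have "range (code_perm l) \<subseteq> code_perm l ` {code_mult l c c' | c c'. c \<in> D_codes \<and> c' \<in> Delta_codes}"
  proof clarify
    fix sw a b h r
    have "(sw, a, b, h, r) = code_mult l (sw, a, b, False, False) (False, False, False, h, r)" by simp
    moreover have "(sw, a, b, False, False) \<in> D_codes" "(False, False, False, h, r) \<in> Delta_codes"
      by (auto simp: D_codes_def Delta_codes_def)
    ultimately show "code_perm l (sw, a, b, h, r) \<in> code_perm l ` {code_mult l c c' | c c'. c \<in> D_codes \<and> c' \<in> Delta_codes}"
      by blast
  qed
  then show "code_perm l ` D_codes <#>\<^bsub>Gll l\<^esub> code_perm l ` Delta_codes = carrier (Gll l)"
    unfolding set_mult_code_perm_image [OF assms(1)] carrier_Gll [OF assms(1)] by blast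
qed

section \<open>The inner holomorph of \<open>D\<close>\<close>

text \<open>The code \<open>(sw, a, b, h, r)\<close> is \<open>d r\<^sup>r h\<^sup>h\<close> with \<open>d = code_left c \<in> D\<close>, and
  \<open>code_right c = s\<^sup>h n\<^sup>r\<close> is the image of \<open>r\<^sup>r h\<^sup>h\<close> under the anti-isomorphism \<open>r \<mapsto> n, h \<mapsto> s\<close>.\<close>

definition code_left :: "code \<Rightarrow> code" where
  "code_left c = (case c of (sw, a, b, h, r) \<Rightarrow> (sw, a, b, False, False))"

definition code_right :: "code \<Rightarrow> code" where
  "code_right c = (case c of (sw, a, b, h, r) \<Rightarrow> (h, \<not> h \<and> r, h \<and> r, False, False))"

lemma code_left_D_codes: "code_left c \<in> D_codes"
  by (cases c) (simp add: code_left_def D_codes_def)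

lemma code_right_D_codes: "code_right c \<in> D_codes"
  by (cases c) (simp add: code_right_def D_codes_def)

lemma code_left_right_D_codes: "d \<in> D_codes \<Longrightarrow> code_left d = d \<and> code_right d = code_one"
  by (auto simp: D_codes_def code_left_def code_right_def)

lemma translation_code_mult:
  assumes "even l" "d \<in> D_codes"
  shows "code_mult l (code_mult l (code_left (code_mult l c c')) d) (code_right (code_mult l c c')) =
    code_mult l (code_mult l (code_left c) (code_mult l (code_mult l (code_left c') d) (code_right c'))) (code_right c)"
  using assms by (cases c; cases c') (auto simp: D_codes_def code_left_def code_right_def)

lemma translation_code_inj:
  assumes "\<And>d. d \<in> D_codes \<Longrightarrow>
    code_mult l (code_mult l (code_left c) d) (code_right c) = code_mult l (code_mult l (code_left c') d) (code_right c')"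
  shows "c = c'"
proof -
  have "code_one \<in> D_codes" "code_s \<in> D_codes" "code_n \<in> D_codes" by (simp_all add: D_codes_explicit)
  then show ?thesis
    using assms [of code_one] assms [of code_s] assms [of code_n]
    by (cases c; cases c') (auto simp: code_left_def code_right_def split: if_splits)
qed

lemma right_translation_code:
  assumes "d \<in> D_codes"
  obtains c where "\<And>x. x \<in> D_codes \<Longrightarrow> code_mult l (code_mult l (code_left c) x) (code_right c) = code_mult l x d"
proof -
  obtain sw a b where d: "d = (sw, a, b, False, False)" using assms by (auto simp: D_codes_def)
  define e where "e = (if sw then a else b)"
  show thesis
    by (rule that [of "(False, e, e, sw, a \<noteq> b)"])
      (auto simp: d e_def D_codes_def code_left_def code_right_def)
qed

definition translation_perm ::
  "nat \<Rightarrow> code \<Rightarrow> ((complex poly \<times> complex poly \<Rightarrow> complex poly \<times> complex poly) \<Rightarrow>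
    (complex poly \<times> complex poly \<Rightarrow> complex poly \<times> complex poly))" where
  "translation_perm l c = (\<lambda>x \<in> code_perm l ` D_codes.
     code_perm l (code_left c) \<otimes>\<^bsub>Gll l\<^esub> x \<otimes>\<^bsub>Gll l\<^esub> code_perm l (code_right c))"

lemma translation_perm_code_perm:
  "l > 0 \<Longrightarrow> d \<in> D_codes \<Longrightarrow>
    translation_perm l c (code_perm l d) = code_perm l (code_mult l (code_mult l (code_left c) d) (code_right c))"
  by (simp add: translation_perm_def code_perm_mult_Gll del: code_mult.simps)

lemma translation_perm_eqI:
  assumes "\<And>d. d \<in> D_codes \<Longrightarrow> F (code_perm l d) = translation_perm l c (code_perm l d)"
    and "\<And>x. x \<notin> code_perm l ` D_codes \<Longrightarrow> F x = undefined"
  shows "F = translation_perm l c"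
proof
  show "F x = translation_perm l c x" for x
    using assms by (cases "x \<in> code_perm l ` D_codes") (auto simp: translation_perm_def)
qed

lemma translation_perm_mult:
  assumes "l > 0" "even l"
  shows "translation_perm l (code_mult l c c') =
    compose (code_perm l ` D_codes) (translation_perm l c) (translation_perm l c')"
  by (rule translation_perm_eqI [symmetric])
    (auto simp: compose_def translation_perm_code_perm [OF assms(1)] translation_code_mult [OF assms(2)]
      D_codes_mult_closed code_left_D_codes code_right_D_codes simp del: code_mult.simps)

lemma translation_perm_one: "l > 0 \<Longrightarrow> translation_perm l code_one = (\<lambda>x \<in> code_perm l ` D_codes. x)"
  by (rule translation_perm_eqI [symmetric])
    (auto simp: translation_perm_code_perm code_left_def code_right_def)

lemma translation_perm_in_BijGroup:
  assumes "l > 0" "even l"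
  shows "translation_perm l c \<in> carrier (BijGroup (code_perm l ` D_codes))"
proof -
  let ?X = "code_perm l ` D_codes"
  have maps: "translation_perm l c ` ?X \<subseteq> ?X" for c
    by (auto simp: translation_perm_code_perm [OF assms(1)] D_codes_mult_closed code_left_D_codes
        code_right_D_codes simp del: code_mult.simps)
  have inverse: "translation_perm l c' (translation_perm l c x) = x"
    if "code_mult l c' c = code_one" "x \<in> ?X" for c c' x
    using fun_cong [OF translation_perm_mult [OF assms, of c' c], of x] that
    by (simp add: compose_def translation_perm_one [OF assms(1)] del: code_mult.simps)
  have "bij_betw (translation_perm l c) ?X ?X"
    by (rule bij_betw_byWitness [where f' = "translation_perm l (code_inv l c)"])
      (use maps inverse code_mult_inv_left code_mult_inv_right in blast)+
  then show ?thesis by (auto simp: BijGroup_def Bij_def translation_perm_def)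
qed

lemma translation_perm_mult_BijGroup:
  assumes "l > 0" "even l"
  shows "translation_perm l c \<otimes>\<^bsub>BijGroup (code_perm l ` D_codes)\<^esub> translation_perm l c' =
    translation_perm l (code_mult l c c')"
  using translation_perm_in_BijGroup [OF assms] translation_perm_mult [OF assms]
  by (simp add: BijGroup_def del: code_mult.simps)

lemma subgroup_range_translation_perm:
  assumes "l > 0" "even l"
  shows "subgroup (range (translation_perm l)) (BijGroup (code_perm l ` D_codes))"
proof (rule subgroup.intro)
  let ?B = "BijGroup (code_perm l ` D_codes)"
  note mult = translation_perm_mult_BijGroup [OF assms]
  show "range (translation_perm l) \<subseteq> carrier ?B"
    using translation_perm_in_BijGroup [OF assms] by auto
  show "x \<otimes>\<^bsub>?B\<^esub> y \<in> range (translation_perm l)" if "x \<in> range (translation_perm l)" "y \<in> range (translation_perm l)" for x y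
    using that mult by auto
  have one: "\<one>\<^bsub>?B\<^esub> = translation_perm l code_one"
    by (simp add: BijGroup_def translation_perm_one [OF assms(1)])
  then show "\<one>\<^bsub>?B\<^esub> \<in> range (translation_perm l)" by simp
  show "inv\<^bsub>?B\<^esub> x \<in> range (translation_perm l)" if x: "x \<in> range (translation_perm l)" for x
  proof -
    obtain c where c: "x = translation_perm l c" using x by blast
    have "inv\<^bsub>?B\<^esub> x = translation_perm l (code_inv l c)"
      unfolding c
      by (rule group.inv_equality [OF group_BijGroup])
        (simp_all add: mult one translation_perm_in_BijGroup [OF assms] del: code_mult.simps code_inv.simps)
    then show ?thesis by simp
  qed
qed

lemma inj_translation_perm:
  assumes "l \<ge> 2"
  shows "inj (translation_perm l)"
proof (rule injI)
  fix c c' assume eq: "translation_perm l c = translation_perm l c'"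
  have "l > 0" using assms by simp
  show "c = c'"
  proof (rule translation_code_inj)
    fix d assume "d \<in> D_codes"
    then show "code_mult l (code_mult l (code_left c) d) (code_right c) =
        code_mult l (code_mult l (code_left c') d) (code_right c')"
      using fun_cong [OF eq, of "code_perm l d"] inj_code_perm [OF assms]
      by (simp add: translation_perm_code_perm [OF \<open>l > 0\<close>] inj_eq del: code_mult.simps)
  qed
qed

lemma carrier_subgroup_ns_s:
  assumes "l > 0"
  shows "carrier (subgroup_generated (Gll l) {nG l \<otimes>\<^bsub>Gll l\<^esub> sG l, sG l}) = code_perm l ` D_codes"
proof -
  have "{nG l \<otimes>\<^bsub>Gll l\<^esub> sG l, sG l} \<subseteq> carrier (Gll l)"
    using carrier_Gll [OF assms] by (simp only: ns_eq [OF assms]) (auto simp: sG_eq)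
  then show ?thesis
    unfolding carrier_subgroup_generated by (simp add: Int_absorb1 generate_ns_s [OF assms])
qed

lemma carrier_inner_holomorph_D:
  assumes "l > 0" "even l"
  shows "carrier (inner_holomorph (subgroup_generated (Gll l) {nG l \<otimes>\<^bsub>Gll l\<^esub> sG l, sG l})) =
    range (translation_perm l)"
proof -
  let ?G = "Gll l" and ?X = "code_perm l ` D_codes"
  let ?D = "subgroup_generated ?G {nG l \<otimes>\<^bsub>?G\<^esub> sG l, sG l}"
  let ?B = "BijGroup ?X"
  let ?left = "\<lambda>a. \<lambda>x \<in> ?X. a \<otimes>\<^bsub>?G\<^esub> x" and ?right = "\<lambda>a. \<lambda>x \<in> ?X. x \<otimes>\<^bsub>?G\<^esub> a"
  have holomorph: "inner_holomorph ?D = subgroup_generated ?B (?left ` ?X \<union> ?right ` ?X)"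
    unfolding inner_holomorph_def carrier_subgroup_ns_s [OF assms(1)] by simp
  have left: "?left (code_perm l d) = translation_perm l d" if "d \<in> D_codes" for d
    by (rule translation_perm_eqI)
      (use that in \<open>auto simp: translation_perm_code_perm [OF assms(1)] code_perm_mult_Gll [OF assms(1)]
        code_left_right_D_codes simp del: code_mult.simps\<close>)
  have right: "?right (code_perm l d) \<in> range (translation_perm l)" if d: "d \<in> D_codes" for d
  proof -
    obtain c where c: "\<And>x. x \<in> D_codes \<Longrightarrow>
        code_mult l (code_mult l (code_left c) x) (code_right c) = code_mult l x d"
      using right_translation_code [OF d] by blast
    have "?right (code_perm l d) = translation_perm l c"
      by (rule translation_perm_eqI)
        (auto simp: translation_perm_code_perm [OF assms(1)] code_perm_mult_Gll [OF assms(1)] c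
          simp del: code_mult.simps)
    then show ?thesis by simp
  qed
  have generators: "?left ` ?X \<union> ?right ` ?X \<subseteq> range (translation_perm l)"
    using left right by (auto simp del: code_mult.simps)
  then have gens_B: "?left ` ?X \<union> ?right ` ?X \<subseteq> carrier ?B"
    using subgroup.subset [OF subgroup_range_translation_perm [OF assms]] by blast
  then have "carrier (inner_holomorph ?D) = generate ?B (?left ` ?X \<union> ?right ` ?X)"
    unfolding holomorph carrier_subgroup_generated by (metis Int_absorb1)
  also have "\<dots> = range (translation_perm l)"
  proof
    show "generate ?B (?left ` ?X \<union> ?right ` ?X) \<subseteq> range (translation_perm l)"
      by (rule group.generate_subgroup_incl [OF group_BijGroup generators subgroup_range_translation_perm [OF assms]])
    show "range (translation_perm l) \<subseteq> generate ?B (?left ` ?X \<union> ?right ` ?X)"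
    proof clarify
      fix c
      let ?a = "code_perm l (code_left c)" and ?b = "code_perm l (code_right c)"
      have ab: "?a \<in> ?X" "?b \<in> ?X" using code_left_D_codes code_right_D_codes by blast+
      then have gens: "?left ?a \<in> generate ?B (?left ` ?X \<union> ?right ` ?X)"
          "?right ?b \<in> generate ?B (?left ` ?X \<union> ?right ` ?X)"
        by (auto intro: generate.incl)
      have "compose ?X (?left ?a) (?right ?b) = translation_perm l c"
      proof (rule translation_perm_eqI)
        fix d assume d: "d \<in> D_codes"
        have "code_perm l d \<otimes>\<^bsub>?G\<^esub> ?b \<in> ?X"
          using d by (simp add: code_perm_mult_Gll [OF assms(1)] D_codes_mult_closed code_right_D_codes
              del: code_mult.simps)
        moreover have "code_perm l e \<in> carrier ?G" for e using carrier_Gll [OF assms(1)] by blast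
        ultimately show "compose ?X (?left ?a) (?right ?b) (code_perm l d) = translation_perm l c (code_perm l d)"
          using d by (simp add: compose_def translation_perm_def monoid.m_assoc [OF group.is_monoid [OF group_Gll]] del: code_mult.simps)
      qed (simp add: compose_def)
      moreover have "?left ?a \<in> carrier ?B" "?right ?b \<in> carrier ?B" using gens_B ab by blast+
      then have "?left ?a \<otimes>\<^bsub>?B\<^esub> ?right ?b = compose ?X (?left ?a) (?right ?b)"
        by (simp add: BijGroup_def)
      ultimately show "translation_perm l c \<in> generate ?B (?left ` ?X \<union> ?right ` ?X)"
        using generate.eng [OF gens] by simp
    qed
  qed
  finally show ?thesis .
qed

lemma Gll_iso_inner_holomorph:
  assumes "l > 0" "even l"
  shows "Gll l \<cong> inner_holomorph (subgroup_generated (Gll l) {nG l \<otimes>\<^bsub>Gll l\<^esub> sG l, sG l})"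
proof (rule iso_of_common_parametrization [where m = "code_mult l"])
  have l2: "l \<ge> 2" using assms by (auto elim: evenE)
  show "carrier (Gll l) = range (code_perm l)" by (rule carrier_Gll [OF assms(1)])
  show "carrier (inner_holomorph (subgroup_generated (Gll l) {nG l \<otimes>\<^bsub>Gll l\<^esub> sG l, sG l})) =
      range (translation_perm l)"
    by (rule carrier_inner_holomorph_D [OF assms])
  show "inj (code_perm l)" by (rule inj_code_perm [OF l2])
  show "inj (translation_perm l)" by (rule inj_translation_perm [OF l2])
  show "code_perm l a \<otimes>\<^bsub>Gll l\<^esub> code_perm l b = code_perm l (code_mult l a b)" for a b
    by (rule code_perm_mult_Gll [OF assms(1)])
  show "translation_perm l a \<otimes>\<^bsub>inner_holomorph (subgroup_generated (Gll l) {nG l \<otimes>\<^bsub>Gll l\<^esub> sG l, sG l})\<^esub>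
      translation_perm l b = translation_perm l (code_mult l a b)" for a b
    using translation_perm_mult_BijGroup [OF assms]
    by (simp add: inner_holomorph_def carrier_subgroup_ns_s [OF assms(1)])
qed

section \<open>Norm invariants\<close>

lemma integral_periodic_shift:
  fixes F :: "real \<Rightarrow> real"
  assumes cont: "continuous_on UNIV F" and periodic: "\<And>x. F (x + 2 * pi) = F x"
    and "0 \<le> a" "a \<le> 2 * pi"
  shows "integral {0..2 * pi} (\<lambda>\<theta>. F (\<theta> + a)) = integral {0..2 * pi} F"
proof -
  have int: "F integrable_on {x..y}" for x y
    by (rule integrable_continuous_real) (rule continuous_on_subset [OF cont], simp)
  have "integral {0..2 * pi} (\<lambda>\<theta>. F (\<theta> + a)) = integral {a..2 * pi + a} F"
    using integral_shift_Icc_real [of 0 "2 * pi" F a] by (simp add: o_def add.commute)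
  also have "\<dots> = integral {a..2 * pi} F + integral {2 * pi..2 * pi + a} F"
    by (rule Henstock_Kurzweil_Integration.integral_combine [symmetric]) (use assms(3,4) int in auto)
  also have "integral {2 * pi..2 * pi + a} F = integral {0..a} (F \<circ> (+) (2 * pi))"
    using integral_shift_Icc_real [of 0 a F "2 * pi"] by (simp add: add.commute)
  also have "F \<circ> (+) (2 * pi) = F" using periodic by (auto simp: o_def add.commute)
  also have "integral {a..2 * pi} F + integral {0..a} F = integral {0..2 * pi} F"
    using Henstock_Kurzweil_Integration.integral_combine [of 0 a "2 * pi" F] int assms(3,4) by (simp add: add.commute)
  finally show ?thesis .
qed

lemma lpnorm_cong:
  "(\<And>\<theta>. norm (poly f (cis \<theta>)) = norm (poly g (cis \<theta>))) \<Longrightarrow> lpnorm p f = lpnorm p g"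
  by (simp add: lpnorm_def)

lemma lpnorm_uminus: "lpnorm p (- f) = lpnorm p f"
  by (rule lpnorm_cong) simp

lemma lpnorm_pdagger: "lpnorm p (pdagger f) = lpnorm p f"
  by (rule lpnorm_cong) (simp add: norm_poly_pdagger_unit_circle)

lemma lpnorm_ptilde:
  assumes "p > 0"
  shows "lpnorm p (ptilde f) = lpnorm p f"
proof -
  let ?F = "\<lambda>\<theta>. norm (poly f (cis \<theta>)) powr p"
  have "continuous_on UNIV ?F"
    by (rule continuous_on_powr') (use assms in \<open>auto intro!: continuous_intros\<close>)
  moreover have "cis (\<theta> + pi) = - cis \<theta>" "cis (\<theta> + 2 * pi) = cis \<theta>" for \<theta>
    by (simp_all add: complex_eq_iff)
  ultimately have "integral {0..2 * pi} (\<lambda>\<theta>. ?F (\<theta> + pi)) = integral {0..2 * pi} ?F"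
    by (intro integral_periodic_shift) simp_all
  then show ?thesis by (simp add: lpnorm_def \<open>\<And>\<theta>. cis (\<theta> + pi) = - cis \<theta>\<close>)
qed

lemma Re_circ_mean_cnj:
  assumes "\<And>\<theta>. F (cis \<theta>) = cnj (G (cis \<theta>))"
  shows "Re (circ_mean F) = Re (circ_mean G)"
proof -
  have "circ_mean F = cnj (circ_mean G)" by (simp add: circ_mean_def assms integral_cnj)
  then show ?thesis by simp
qed

definition norm_invariants :: "real \<Rightarrow> complex poly \<times> complex poly \<Rightarrow> real \<times> real \<times> real \<times> real" where
  "norm_invariants p x = (case x of (f, g) \<Rightarrow>
     (lpnorm p f * lpnorm p g, lpnorm p (f * g), lpnorm p (f * ptilde g),
      Re (circ_mean (\<lambda>z. poly (f * ptilde f) z * cnj (poly (g * ptilde g) z)))))"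

lemma norm_invariants_neg_if: "norm_invariants p (neg_if a f, neg_if b g) = norm_invariants p (f, g)"
proof -
  have "lpnorm p (neg_if a f * neg_if b g) = lpnorm p (f * g)"
    and "lpnorm p (neg_if a f * ptilde (neg_if b g)) = lpnorm p (f * ptilde g)"
    by (cases a; cases b; simp add: neg_if_def lpnorm_uminus)+
  then show ?thesis
    by (cases a; cases b) (simp_all add: norm_invariants_def neg_if_def lpnorm_uminus)
qed

lemma norm_invariants_swap:
  assumes "p > 0"
  shows "norm_invariants p (g, f) = norm_invariants p (f, g)"
proof -
  have "lpnorm p (g * ptilde f) = lpnorm p (f * ptilde g)"
    using lpnorm_ptilde [OF assms, of "f * ptilde g"] by (simp add: ptilde_mult mult.commute)
  moreover have "Re (circ_mean (\<lambda>z. poly (g * ptilde g) z * cnj (poly (f * ptilde f) z))) =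
      Re (circ_mean (\<lambda>z. poly (f * ptilde f) z * cnj (poly (g * ptilde g) z)))"
    by (rule Re_circ_mean_cnj) (simp add: mult.commute)
  ultimately show ?thesis by (simp add: norm_invariants_def mult.commute)
qed

lemma norm_invariants_ptilde:
  assumes "p > 0"
  shows "norm_invariants p (ptilde f, ptilde g) = norm_invariants p (f, g)"
  using lpnorm_ptilde [OF assms, of "f * g"] lpnorm_ptilde [OF assms, of "f * ptilde g"]
  by (simp add: norm_invariants_def lpnorm_ptilde [OF assms] ptilde_mult mult.commute)

lemma norm_invariants_pdagger:
  assumes "degree f = degree g"
  shows "norm_invariants p (pdagger f, pdagger g) = norm_invariants p (f, g)"
proof -
  have "lpnorm p (pdagger f * pdagger g) = lpnorm p (f * g)"
    and "lpnorm p (pdagger f * ptilde (pdagger g)) = lpnorm p (f * ptilde g)"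
    by (rule lpnorm_cong; simp add: norm_mult norm_poly_pdagger_unit_circle)+
  moreover have "Re (circ_mean (\<lambda>z. poly (pdagger f * ptilde (pdagger f)) z * cnj (poly (pdagger g * ptilde (pdagger g)) z))) =
      Re (circ_mean (\<lambda>z. poly (f * ptilde f) z * cnj (poly (g * ptilde g) z)))"
  proof (rule Re_circ_mean_cnj)
    fix \<theta>
    define z where "z = cis \<theta>"
    define d where "d = degree g"
    have unit: "norm z = 1" "norm (- z) = 1" by (simp_all add: z_def)
    have "z * cnj z = 1" using complex_norm_square [of z] unit by simp
    then have "z ^ d * cnj z ^ d = 1" "(- z) ^ d * cnj (- z) ^ d = 1"
      by (simp_all flip: power_mult_distrib)
    \<comment> \<open>the factors \<open>z ^ d\<close> and \<open>(- z) ^ d\<close> from \<open>poly_pdagger_unit_circle\<close> cancel against their conjugates\<close>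
    then show "poly (pdagger f * ptilde (pdagger f)) z * cnj (poly (pdagger g * ptilde (pdagger g)) z) =
        cnj (poly (f * ptilde f) z * cnj (poly (g * ptilde g) z))"
      using assms unfolding d_def
      by (simp add: poly_pdagger_unit_circle [OF unit(1)] poly_pdagger_unit_circle [OF unit(2)])
        (simp add: ac_simps)
  qed
  ultimately show ?thesis by (simp add: norm_invariants_def lpnorm_pdagger)
qed

lemma norm_invariants_code_act:
  assumes "f \<in> Pl l" "g \<in> Pl l" "p > 0"
  shows "norm_invariants p (code_act c (f, g)) = norm_invariants p (f, g)"
proof -
  obtain sw a b h r where c: "c = (sw, a, b, h, r)" by (cases c) auto
  have "norm_invariants p (tilde_dagger h r f, tilde_dagger h r g) = norm_invariants p (f, g)"
    using assms Pl_ptilde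
    by (auto simp: tilde_dagger_def norm_invariants_ptilde norm_invariants_pdagger Pl_def)
  then show ?thesis
    unfolding c using norm_invariants_swap [OF assms(3)]
    by (simp add: norm_invariants_neg_if)
qed

lemma Gll_preserves_norm_invariants:
  assumes "l > 0" "t \<in> carrier (Gll l)" "f \<in> Pl l" "g \<in> Pl l" "p > 0"
  shows "norm_invariants p (t (f, g)) = norm_invariants p (f, g)"
proof -
  obtain c where "t = code_perm l c" using assms(2) carrier_Gll [OF assms(1)] by blast
  then have "t (f, g) = code_act c (f, g)" using assms(3,4) by (simp add: code_perm_def)
  then show ?thesis using norm_invariants_code_act [OF assms(3-5)] by simp
qed

theorem proposition3p4:
  fixes l :: nat
  assumes "l > 0"
  defines "G \<equiv> Gll l"
    and "ns \<equiv> nG l \<otimes>\<^bsub>Gll l\<^esub> sG l"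
    and "rh \<equiv> rG l \<otimes>\<^bsub>Gll l\<^esub> hG l"
  shows
    "group G \<and>
     carrier G \<subseteq> carrier (BijGroup (Pl l \<times> Pl l)) \<and>
     {sG l, nG l, hG l, rG l} \<subseteq> carrier G \<and>
     subgroup (generate G {ns, sG l}) G \<and>
     card (generate G {ns, sG l}) = 8 \<and>
     group.ord G ns = 4 \<and> group.ord G (sG l) = 2 \<and>
     sG l \<otimes>\<^bsub>G\<^esub> ns \<otimes>\<^bsub>G\<^esub> inv\<^bsub>G\<^esub> (sG l) = inv\<^bsub>G\<^esub> ns \<and>
     (l = 1 \<longrightarrow>
        group.ord G (rG l) = 2 \<and>
        internal_direct_product2 G (generate G {ns, sG l}) (generate G {rG l})) \<and>
     (odd l \<and> l > 1 \<longrightarrow>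
        group.ord G (hG l) = 2 \<and> group.ord G (rG l) = 2 \<and>
        internal_direct_product3 G (generate G {ns, sG l}) (generate G {hG l}) (generate G {rG l})) \<and>
     (even l \<longrightarrow>
        card (generate G {rh, hG l}) = 8 \<and>
        group.ord G rh = 4 \<and> group.ord G (hG l) = 2 \<and>
        hG l \<otimes>\<^bsub>G\<^esub> rh \<otimes>\<^bsub>G\<^esub> inv\<^bsub>G\<^esub> (hG l) = inv\<^bsub>G\<^esub> rh \<and>
        internal_central_product G (generate G {ns, sG l}) (generate G {rh, hG l}) \<and>
        G \<cong> inner_holomorph (subgroup_generated G {ns, sG l})) \<and>
     (\<forall>t\<in>carrier G. \<forall>f\<in>Pl l. \<forall>g\<in>Pl l. \<forall>p::real. p \<ge> 1 \<longrightarrow>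
        (let a = fst (t (f, g)); b = snd (t (f, g)) in
          lpnorm p a * lpnorm p b = lpnorm p f * lpnorm p g \<and>
          lpnorm p (a * b) = lpnorm p (f * g) \<and>
          lpnorm p (a * ptilde b) = lpnorm p (f * ptilde g) \<and>
          Re (circ_mean (\<lambda>z. poly (a * ptilde a) z * cnj (poly (b * ptilde b) z))) =
          Re (circ_mean (\<lambda>z. poly (f * ptilde f) z * cnj (poly (g * ptilde g) z)))))"
proof -
  have carrier: "carrier G = range (code_perm l)" unfolding G_def by (rule carrier_Gll [OF assms(1)])
  have "{ns, sG l} \<subseteq> carrier G"
    unfolding ns_def carrier by (simp only: ns_eq [OF assms(1)]) (auto simp: sG_eq G_def)
  then have "subgroup (generate G {ns, sG l}) G"
    unfolding G_def by (rule group.generate_is_subgroup [OF group_Gll])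
  moreover have "carrier G \<subseteq> carrier (BijGroup (Pl l \<times> Pl l))"
    using code_perm_in_BijGroup [OF assms(1)] carrier by auto
  moreover have "{sG l, nG l, hG l, rG l} \<subseteq> carrier G"
    by (auto simp: carrier sG_eq nG_eq hG_eq rG_eq)
  moreover have "group.ord G (hG l) = 2" if "l > 1"
    unfolding G_def hG_eq by (rule ord_code_perm_eq_2 [OF assms(1)]) (use that in simp_all)
  moreover have "group.ord G (rG l) = 2"
    unfolding G_def rG_eq by (rule ord_code_perm_eq_2 [OF assms(1)]) simp_all
  moreover have "generate G {rG l} = code_perm l ` {code_one, code_r}" "generate G {hG l} = code_perm l ` {code_one, code_h}"
    unfolding G_def rG_eq hG_eq by (simp_all add: generate_code_perm_involution [OF assms(1)])
  moreover have "\<forall>t\<in>carrier G. \<forall>f\<in>Pl l. \<forall>g\<in>Pl l. \<forall>p::real. p \<ge> 1 \<longrightarrow>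
      norm_invariants p (t (f, g)) = norm_invariants p (f, g)"
    unfolding G_def using Gll_preserves_norm_invariants [OF assms(1)] by simp
  ultimately show ?thesis
    unfolding G_def ns_def rh_def
    using group_Gll dihedral_ns_s [OF assms(1)] generate_ns_s [OF assms(1)] direct_product_length_1
      direct_product_odd_length dihedral_rh_h [OF assms(1)] generate_rh_h [OF assms(1)]
      central_product_even_length [OF assms(1)] Gll_iso_inner_holomorph [OF assms(1)]
    by (auto simp: norm_invariants_def Let_def split: prod.splits)
qed

end
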